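(* Let $H$ be any graph obtained from $F_4$ by splitting a vertex. Then $H$ contains $K_{3,4}$ as a minor.
   Context: $F_4$ is the graph with vertex set $\{f^1,f^2\}\cup\{f^i_j: i\in\{1,2\}, j\in\{1,2,3,4\}\}$ and the 16 edges: for each $i\in\{1,2\}$, $f^if^i_1$, $f^if^i_2$, $f^if^i_4$, $f^i_3f^i_1$, $f^i_3f^i_2$, $f^i_3f^i_4$; and $f^1_jf^2_{5-j}$ for $j=1,2,3,4$. Splitting a vertex $v$ of a graph means: delete $v$, add two new adjacent vertices $v_1,v_2$, and join each neighbour of $v$ to exactly one of $v_1,v_2$, so that each of $v_1,v_2$ is joined to at least two neighbours of $v$. *)

theory Defs
  imports Main
begin

text \<open>Finite simple graphs are given by a vertex set V and an edge set E of
  two-element subsets of V.\<close>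

definition nbrs :: "'a set set \<Rightarrow> 'a \<Rightarrow> 'a set" where
  "nbrs E v = {u. {u, v} \<in> E}"

definition connected_in :: "'a set set \<Rightarrow> 'a set \<Rightarrow> bool" where
  "connected_in E S \<longleftrightarrow>
     (\<forall>x\<in>S. \<forall>y\<in>S. (\<lambda>a b. a \<in> S \<and> b \<in> S \<and> {a, b} \<in> E)\<^sup>*\<^sup>* x y)"

definition has_minor :: "'a set \<Rightarrow> 'a set set \<Rightarrow> 'b set \<Rightarrow> 'b set set \<Rightarrow> bool" where
  "has_minor VH EH VK EK \<longleftrightarrow>
     (\<exists>\<phi> :: 'b \<Rightarrow> 'a set.
        (\<forall>x\<in>VK. \<phi> x \<noteq> {} \<and> \<phi> x \<subseteq> VH \<and> connected_in EH (\<phi> x)) \<and>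
        (\<forall>x\<in>VK. \<forall>y\<in>VK. x \<noteq> y \<longrightarrow> \<phi> x \<inter> \<phi> y = {}) \<and>
        (\<forall>x y. {x, y} \<in> EK \<longrightarrow> (\<exists>a\<in>\<phi> x. \<exists>b\<in>\<phi> y. {a, b} \<in> EH)))"

definition Kbip_V :: "nat \<Rightarrow> nat \<Rightarrow> (nat + nat) set" where
  "Kbip_V m n = Inl ` {0..<m} \<union> Inr ` {0..<n}"

definition Kbip_E :: "nat \<Rightarrow> nat \<Rightarrow> (nat + nat) set set" where
  "Kbip_E m n = {{Inl i, Inr j} | i j. i < m \<and> j < n}"

text \<open>The graph F_4: F i is f^i, Fs i j is f^i_j.\<close>
datatype f4v = F nat | Fs nat nat

definition F4_V :: "f4v set" where
  "F4_V = {F 1, F 2} \<union> {Fs i j | i j. i \<in> {1, 2} \<and> j \<in> {1, 2, 3, 4}}"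

definition F4_E :: "f4v set set" where
  "F4_E = (\<Union>i\<in>{1, 2::nat}. {{F i, Fs i 1}, {F i, Fs i 2}, {F i, Fs i 4},
                             {Fs i 3, Fs i 1}, {Fs i 3, Fs i 2}, {Fs i 3, Fs i 4}})
          \<union> {{Fs 1 j, Fs 2 (5 - j)} | j. j \<in> {1, 2, 3, 4}}"

text \<open>Splitting vertex v: the old vertices u \<noteq> v become Inl u, the two new adjacent
  vertices are Inr True and Inr False; each neighbour u of v is joined to Inr (s u).\<close>
definition split_V :: "'a set \<Rightarrow> 'a \<Rightarrow> ('a + bool) set" where
  "split_V V v = Inl ` (V - {v}) \<union> {Inr True, Inr False}"

definition split_E :: "'a set set \<Rightarrow> 'a \<Rightarrow> ('a \<Rightarrow> bool) \<Rightarrow> ('a + bool) set set" where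
  "split_E E v s = {{Inr True, Inr False}} \<union> {Inl ` e | e. e \<in> E \<and> v \<notin> e}
                   \<union> {{Inl u, Inr (s u)} | u. u \<in> nbrs E v}"

end

theory Submission
  imports Defs "HOL-Combinatorics.Transposition"
begin

text \<open>Only \<open>f\<^sup>1\<^sub>3\<close> and \<open>f\<^sup>2\<^sub>3\<close> have degree 4 in \<open>F\<^sub>4\<close>; every other vertex has degree 3
  and cannot be split with two neighbours on each side. The automorphism of \<open>F\<^sub>4\<close> exchanging
  the superscripts 1 and 2 maps \<open>f\<^sup>1\<^sub>3\<close> to \<open>f\<^sup>2\<^sub>3\<close>, and exchanging the two new vertices
  replaces \<open>s\<close> by \<open>\<not> s\<close>, so it suffices to split \<open>f\<^sup>1\<^sub>3\<close> with \<open>f\<^sup>1\<^sub>1\<close> on the \<open>s\<close>-side.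
  The neighbour sharing that side with \<open>f\<^sup>1\<^sub>1\<close> is then \<open>f\<^sup>1\<^sub>2\<close>, \<open>f\<^sup>1\<^sub>4\<close> or \<open>f\<^sup>2\<^sub>2\<close>, and in each
  case seven explicit branch sets form a model of \<open>K\<^sub>3\<^sub>,\<^sub>4\<close>.\<close>

lemma connected_in_singleton [simp]: "connected_in E {a}"
  by (simp add: connected_in_def)

lemma connected_in_insert [simp]:
  assumes "connected_in E S" and "\<exists>y\<in>S. {x, y} \<in> E"
  shows "connected_in E (insert x S)"
proof -
  obtain y where "y \<in> S" and xy: "{x, y} \<in> E" using assms(2) by blast
  define R where "R a b \<longleftrightarrow> a \<in> insert x S \<and> b \<in> insert x S \<and> {a, b} \<in> E" for a b
  have in_S: "R\<^sup>*\<^sup>* a b" if "a \<in> S" "b \<in> S" for a b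
  proof -
    have "(\<lambda>a b. a \<in> S \<and> b \<in> S \<and> {a, b} \<in> E)\<^sup>*\<^sup>* a b"
      using assms(1) that unfolding connected_in_def by blast
    then show ?thesis
      by (rule rtranclp_mono[THEN predicate2D, rotated]) (auto simp: R_def)
  qed
  have "R x y" "R y x"
    using \<open>y \<in> S\<close> xy by (auto simp: R_def insert_commute)
  then have "R\<^sup>*\<^sup>* x a" "R\<^sup>*\<^sup>* a x" if "a \<in> S" for a
    using in_S[OF \<open>y \<in> S\<close> that] in_S[OF that \<open>y \<in> S\<close>]
    by (auto intro: converse_rtranclp_into_rtranclp rtranclp.rtrancl_into_rtrancl)
  then show ?thesis
    using in_S unfolding connected_in_def R_def[symmetric] by blast
qed

lemma connected_in_image:
  assumes "connected_in E S"
  shows "connected_in (image h ` E) (h ` S)"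
  unfolding connected_in_def
proof (intro ballI)
  fix x y assume "x \<in> h ` S" "y \<in> h ` S"
  then obtain a b where "a \<in> S" "b \<in> S" "x = h a" "y = h b" by blast
  from assms \<open>a \<in> S\<close> \<open>b \<in> S\<close>
  have "(\<lambda>a b. a \<in> S \<and> b \<in> S \<and> {a, b} \<in> E)\<^sup>*\<^sup>* a b"
    unfolding connected_in_def by blast
  then show "(\<lambda>a b. a \<in> h ` S \<and> b \<in> h ` S \<and> {a, b} \<in> image h ` E)\<^sup>*\<^sup>* x y"
    unfolding \<open>x = h a\<close> \<open>y = h b\<close>
  proof (induction rule: rtranclp_induct)
    case (step b c)
    have "h ` {b, c} \<in> image h ` E"
      using step.hyps(2) by blast
    with step show ?case
      by (simp add: rtranclp.rtrancl_into_rtrancl)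
  qed simp
qed

lemma has_minor_image:
  assumes "inj_on h VH" and "has_minor VH EH VK EK"
  shows "has_minor (h ` VH) (image h ` EH) VK EK"
proof -
  obtain \<phi> where
    branch: "\<forall>x\<in>VK. \<phi> x \<noteq> {} \<and> \<phi> x \<subseteq> VH \<and> connected_in EH (\<phi> x)" and
    disj: "\<forall>x\<in>VK. \<forall>y\<in>VK. x \<noteq> y \<longrightarrow> \<phi> x \<inter> \<phi> y = {}" and
    adj: "\<forall>x y. {x, y} \<in> EK \<longrightarrow> (\<exists>a\<in>\<phi> x. \<exists>b\<in>\<phi> y. {a, b} \<in> EH)"
    using assms(2) unfolding has_minor_def by (elim exE conjE)
  show ?thesis
    unfolding has_minor_def
  proof (intro exI[of _ "\<lambda>x. h ` \<phi> x"] conjI ballI allI impI)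
    fix x assume "x \<in> VK"
    with branch show "h ` \<phi> x \<noteq> {}" "h ` \<phi> x \<subseteq> h ` VH"
      "connected_in (image h ` EH) (h ` \<phi> x)"
      by (auto simp: connected_in_image)
  next
    fix x y assume "x \<in> VK" "y \<in> VK" "x \<noteq> y"
    with branch disj have "\<phi> x \<union> \<phi> y \<subseteq> VH" "\<phi> x \<inter> \<phi> y = {}"
      by auto
    then show "h ` \<phi> x \<inter> h ` \<phi> y = {}"
      using assms(1) by (simp add: inj_on_image_Int[symmetric])
  next
    fix x y assume "{x, y} \<in> EK"
    then obtain a b where ab: "a \<in> \<phi> x" "b \<in> \<phi> y" and "{a, b} \<in> EH"
      using adj by blast
    then have "h ` {a, b} \<in> image h ` EH" by blast
    with ab show "\<exists>a\<in>h ` \<phi> x. \<exists>b\<in>h ` \<phi> y. {a, b} \<in> image h ` EH"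
      by auto
  qed
qed

lemma has_minor_Kbip_I:
  assumes "length As = m" and "length Bs = n"
    and branch: "\<forall>X\<in>set (As @ Bs). X \<noteq> {} \<and> X \<subseteq> V \<and> connected_in E X"
    and disjoint: "sorted_wrt disjnt (As @ Bs)"
    and adjacent: "\<forall>A\<in>set As. \<forall>B\<in>set Bs. \<exists>a\<in>A. \<exists>b\<in>B. {a, b} \<in> E"
  shows "has_minor V E (Kbip_V m n) (Kbip_E m n)"
proof -
  define idx where "idx x = (case x of Inl i \<Rightarrow> i | Inr j \<Rightarrow> m + j)" for x
  define \<phi> where "\<phi> x = (As @ Bs) ! idx x" for x
  have idx_less: "idx x < length (As @ Bs)" if "x \<in> Kbip_V m n" for x
    using that assms(1,2) by (auto simp: Kbip_V_def idx_def)
  have \<phi>_Inl: "\<phi> (Inl i) = As ! i" if "i < m" for i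
    using that assms(1) by (simp add: \<phi>_def idx_def nth_append)
  have \<phi>_Inr: "\<phi> (Inr j) = Bs ! j" if "j < n" for j
    using that assms(1) by (simp add: \<phi>_def idx_def nth_append)
  have adj: "\<exists>a\<in>\<phi> (Inl i). \<exists>b\<in>\<phi> (Inr j). {a, b} \<in> E" if "i < m" "j < n" for i j
    using adjacent that assms(1,2) by (simp add: \<phi>_Inl \<phi>_Inr)
  show ?thesis
    unfolding has_minor_def
  proof (intro exI[of _ \<phi>] conjI ballI allI impI)
    fix x assume "x \<in> Kbip_V m n"
    then have "\<phi> x \<in> set (As @ Bs)"
      unfolding \<phi>_def using idx_less nth_mem by blast
    with branch show "\<phi> x \<noteq> {}" "\<phi> x \<subseteq> V" "connected_in E (\<phi> x)" by auto
  next
    fix x y assume xy: "x \<in> Kbip_V m n" "y \<in> Kbip_V m n" "x \<noteq> y"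
    then have "idx x \<noteq> idx y"
      by (auto simp: Kbip_V_def idx_def)
    then have "disjnt (\<phi> x) (\<phi> y)"
      using disjoint idx_less[OF xy(1)] idx_less[OF xy(2)]
      unfolding \<phi>_def sorted_wrt_iff_nth_less
      by (metis disjnt_sym linorder_neqE_nat)
    then show "\<phi> x \<inter> \<phi> y = {}" by (simp add: disjnt_def)
  next
    fix x y assume "{x, y} \<in> Kbip_E m n"
    then obtain i j where "i < m" "j < n" "{x, y} = {Inl i, Inr j}"
      unfolding Kbip_E_def by blast
    moreover obtain a b where "a \<in> \<phi> (Inl i)" "b \<in> \<phi> (Inr j)" "{a, b} \<in> E"
      using adj[OF \<open>i < m\<close> \<open>j < n\<close>] by blast
    moreover have "{b, a} \<in> E"
      using \<open>{a, b} \<in> E\<close> by (simp add: insert_commute)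
    ultimately show "\<exists>a\<in>\<phi> x. \<exists>b\<in>\<phi> y. {a, b} \<in> E"
      by (auto simp: doubleton_eq_iff)
  qed
qed

lemma nbrs_empty [simp]: "nbrs {} v = {}"
  by (simp add: nbrs_def)

lemma nbrs_insert_edge [simp]:
  "nbrs (insert {a, b} E) v
     = (if v = a then {b} else {}) \<union> (if v = b then {a} else {}) \<union> nbrs E v"
  by (auto simp: nbrs_def doubleton_eq_iff)

lemma nbrs_image:
  assumes "inj f"
  shows "nbrs (image f ` E) (f v) = f ` nbrs E v"
proof (intro set_eqI iffI)
  fix u assume "u \<in> nbrs (image f ` E) (f v)"
  then obtain e where "e \<in> E" and e: "{u, f v} = f ` e"
    unfolding nbrs_def by auto
  then obtain w where "w \<in> e" "u = f w" by (metis image_iff insertI1)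
  with e have "f ` {w, v} = f ` e" by simp
  then have "{w, v} = e" using assms by (rule inj_image_eq_iff[THEN iffD1, rotated])
  with \<open>e \<in> E\<close> \<open>u = f w\<close> show "u \<in> f ` nbrs E v"
    unfolding nbrs_def by blast
next
  fix u assume "u \<in> f ` nbrs E v"
  then obtain w where "{w, v} \<in> E" "u = f w" unfolding nbrs_def by blast
  then have "f ` {w, v} \<in> image f ` E" by blast
  with \<open>u = f w\<close> show "u \<in> nbrs (image f ` E) (f v)"
    unfolding nbrs_def by simp
qed

lemma card_nbrs_image_filter:
  assumes "inj f"
  shows "card {u \<in> nbrs (image f ` E) (f v). P u} = card {u \<in> nbrs E v. P (f u)}"
proof -
  have "{u \<in> nbrs (image f ` E) (f v). P u} = f ` {u \<in> nbrs E v. P (f u)}"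
    by (auto simp: nbrs_image[OF assms])
  then show ?thesis
    using assms by (simp add: card_image inj_on_subset)
qed

lemma card_ge_sum_if_split:
  assumes "0 < m" and "0 < n"
    and "m \<le> card {x \<in> A. P x}" and "n \<le> card {x \<in> A. \<not> P x}"
  shows "m + n \<le> card A"
proof -
  have "card {x \<in> A. P x} \<noteq> 0" "card {x \<in> A. \<not> P x} \<noteq> 0"
    using assms by linarith+
  then have "finite {x \<in> A. P x}" "finite {x \<in> A. \<not> P x}"
    by (meson card.infinite)+
  moreover have "A = {x \<in> A. P x} \<union> {x \<in> A. \<not> P x}" by blast
  ultimately have "card A = card {x \<in> A. P x} + card {x \<in> A. \<not> P x}"
    by (metis (no_types, lifting) card_Un_disjoint disjoint_iff mem_Collect_eq)
  with assms(3,4) show ?thesis by linarith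
qed

lemma mem_split_E_iff:
  "X \<in> split_E E v s \<longleftrightarrow> X = {Inr True, Inr False}
     \<or> (\<exists>e. X = Inl ` e \<and> e \<in> E \<and> v \<notin> e) \<or> (\<exists>u. X = {Inl u, Inr (s u)} \<and> u \<in> nbrs E v)"
  unfolding split_E_def by blast

lemma image_Inl_in_split_E_iff:
  "Inl ` e \<in> split_E E v s \<longleftrightarrow> e \<in> E \<and> v \<notin> e"
proof -
  have "Inl ` e \<noteq> {Inr True, Inr False}" "Inl ` e \<noteq> {Inl u, Inr t}" for u t
    by blast+
  moreover have "Inl ` e = Inl ` e' \<longleftrightarrow> e = e'" for e' :: "'a set"
    by (simp add: inj_image_eq_iff)
  ultimately show ?thesis
    unfolding mem_split_E_iff by metis
qed

lemma Inl_Inl_in_split_E_iff [simp]: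
  "{Inl a, Inl b} \<in> split_E E v s \<longleftrightarrow> {a, b} \<in> E \<and> a \<noteq> v \<and> b \<noteq> v"
  using image_Inl_in_split_E_iff[of "{a, b}"] by auto

lemma Inl_Inr_in_split_E_iff [simp]:
  "{Inl u, Inr t} \<in> split_E E v s \<longleftrightarrow> {u, v} \<in> E \<and> s u = t"
proof -
  have "{Inl u, Inr t} \<noteq> {Inr True, Inr False}" "{Inl u, Inr t} \<noteq> Inl ` e" for e
    by blast+
  moreover have "{Inl u, Inr t} = {Inl w, Inr (s w)} \<longleftrightarrow> w = u \<and> s u = t" for w
    by (auto simp: doubleton_eq_iff)
  ultimately show ?thesis
    unfolding mem_split_E_iff nbrs_def by (simp add: conj_commute)
qed

lemma Inr_Inl_in_split_E_iff [simp]: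
  "{Inr t, Inl u} \<in> split_E E v s \<longleftrightarrow> {u, v} \<in> E \<and> s u = t"
  by (subst insert_commute) (rule Inl_Inr_in_split_E_iff)

lemma Inr_Inr_in_split_E_iff [simp]:
  "{Inr a, Inr b} \<in> split_E E v s \<longleftrightarrow> a \<noteq> b"
proof -
  have "{Inr a, Inr b} \<noteq> Inl ` e" "{Inr a, Inr b} \<noteq> {Inl u, Inr t}" for e u t
    by blast+
  moreover have "{Inr a, Inr b} = {Inr True, Inr False} \<longleftrightarrow> a \<noteq> b"
    by (cases a; cases b) (simp_all add: doubleton_eq_iff)
  ultimately show ?thesis
    unfolding mem_split_E_iff by metis
qed

lemma image_map_sum_Inr_bool:
  fixes g :: "bool \<Rightarrow> bool"
  assumes "inj g"
  shows "map_sum f g ` {Inr True, Inr False} = {Inr True, Inr False}"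
proof -
  have "g True \<noteq> g False" using assms by (auto dest: injD)
  then show ?thesis by (cases "g True") auto
qed

lemma split_V_relabel:
  fixes g :: "bool \<Rightarrow> bool"
  assumes "inj f" and "inj g"
  shows "map_sum f g ` split_V V v = split_V (f ` V) (f v)"
proof -
  have "f ` (V - {v}) = f ` V - {f v}"
    using assms(1) by (simp add: image_set_diff)
  moreover have "map_sum f g ` Inl ` A = Inl ` f ` A" for A
    by (simp add: image_image)
  ultimately show ?thesis
    unfolding split_V_def image_Un image_map_sum_Inr_bool[OF assms(2)] by simp
qed

lemma split_E_relabel:
  fixes g :: "bool \<Rightarrow> bool"
  assumes "inj f" and "inj g" and "\<And>u. s' (f u) = g (s u)"
  shows "image (map_sum f g) ` split_E E v s = split_E (image f ` E) (f v) s'"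
proof -
  have setcompr: "{Inl ` e | e. e \<in> X \<and> w \<notin> e} = image Inl ` {e \<in> X. w \<notin> e}" for X w
    by blast
  have "image (map_sum f g) ` image Inl ` {e \<in> E. v \<notin> e}
      = image Inl ` image f ` {e \<in> E. v \<notin> e}"
    by (simp add: image_image)
  also have "image f ` {e \<in> E. v \<notin> e} = {e \<in> image f ` E. f v \<notin> e}"
    using assms(1) by (auto dest: injD)
  finally have old_edges: "image (map_sum f g) ` {Inl ` e | e. e \<in> E \<and> v \<notin> e}
      = {Inl ` e | e. e \<in> image f ` E \<and> f v \<notin> e}"
    unfolding setcompr .
  have "image (map_sum f g) ` {{Inl u, Inr (s u)} | u. u \<in> nbrs E v}
      = {{Inl u, Inr (s' u)} | u. u \<in> f ` nbrs E v}"
    by (simp add: Setcompr_eq_image image_image assms(3))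
  then have split_edges: "image (map_sum f g) ` {{Inl u, Inr (s u)} | u. u \<in> nbrs E v}
      = {{Inl u, Inr (s' u)} | u. u \<in> nbrs (image f ` E) (f v)}"
    by (simp add: nbrs_image[OF assms(1)])
  show ?thesis
    unfolding split_E_def image_Un image_insert[of "image (map_sum f g)"] image_empty
      image_map_sum_Inr_bool[OF assms(2)] old_edges split_edges by simp
qed

lemma has_minor_split_relabel:
  fixes g :: "bool \<Rightarrow> bool"
  assumes "inj f" and "inj g" and "\<And>u. s' (f u) = g (s u)"
    and "has_minor (split_V V v) (split_E E v s) VK EK"
  shows "has_minor (split_V (f ` V) (f v)) (split_E (image f ` E) (f v) s') VK EK"
  using has_minor_image[OF inj_on_subset[OF sum.inj_map[OF assms(1,2)] subset_UNIV] assms(4)]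
  by (simp add: split_V_relabel[OF assms(1,2)] split_E_relabel[of f g s' s, OF assms(1-3)])

lemma F4_V_eq:
  "F4_V = {F 1, F 2, Fs 1 1, Fs 1 2, Fs 1 3, Fs 1 4, Fs 2 1, Fs 2 2, Fs 2 3, Fs 2 4}"
proof (intro set_eqI)
  show "x \<in> F4_V \<longleftrightarrow> x \<in> {F 1, F 2, Fs 1 1, Fs 1 2, Fs 1 3, Fs 1 4, Fs 2 1, Fs 2 2, Fs 2 3, Fs 2 4}"
    for x by (cases x) (auto simp: F4_V_def)
qed

lemma F4_E_eq:
  "F4_E = {{Fs 1 1, Fs 2 4}, {Fs 1 2, Fs 2 3}, {Fs 1 3, Fs 2 2}, {Fs 1 4, Fs 2 1},
           {F 2, Fs 2 1}, {F 2, Fs 2 2}, {F 2, Fs 2 4},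
           {Fs 2 3, Fs 2 1}, {Fs 2 3, Fs 2 2}, {Fs 2 3, Fs 2 4},
           {F 1, Fs 1 1}, {F 1, Fs 1 2}, {F 1, Fs 1 4},
           {Fs 1 3, Fs 1 1}, {Fs 1 3, Fs 1 2}, {Fs 1 3, Fs 1 4}}"
proof -
  have "{{Fs 1 j, Fs 2 (5 - j)} | j. j \<in> {1, 2, 3, 4 :: nat}}
      = {{Fs 1 1, Fs 2 4}, {Fs 1 2, Fs 2 3}, {Fs 1 3, Fs 2 2}, {Fs 1 4, Fs 2 1}}"
    unfolding Setcompr_eq_image by simp
  then show ?thesis
    unfolding F4_E_def by simp
qed

lemma nbrs_F4_Fs13: "nbrs F4_E (Fs 1 3) = {Fs 1 1, Fs 1 2, Fs 1 4, Fs 2 2}"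
  by (auto simp: F4_E_eq)

lemma card_nbrs_F4_le_3:
  assumes "v \<in> F4_V" and "v \<noteq> Fs 1 3" and "v \<noteq> Fs 2 3"
  shows "card (nbrs F4_E v) \<le> 3"
  using assms unfolding F4_V_eq by (auto simp: F4_E_eq)

primrec F4_flip :: "f4v \<Rightarrow> f4v" where
  "F4_flip (F i) = F (transpose 1 2 i)"
| "F4_flip (Fs i j) = Fs (transpose 1 2 i) j"

lemma F4_flip_involutory [simp]: "F4_flip (F4_flip x) = x"
  by (cases x) simp_all

lemma inj_F4_flip: "inj F4_flip"
  by (metis F4_flip_involutory injI)

lemma F4_flip_image_V: "F4_flip ` F4_V = F4_V"
  by (simp add: F4_V_eq insert_commute)

lemma F4_flip_image_E: "image F4_flip ` F4_E = F4_E"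
  by (simp add: F4_E_eq insert_commute)

lemma K34_minor_split_Fs13_Fs11:
  assumes "s (Fs 1 1)"
    and "card {u \<in> nbrs F4_E (Fs 1 3). s u} \<ge> 2"
    and "card {u \<in> nbrs F4_E (Fs 1 3). \<not> s u} \<ge> 2"
  shows "has_minor (split_V F4_V (Fs 1 3)) (split_E F4_E (Fs 1 3) s) (Kbip_V 3 4) (Kbip_E 3 4)"
proof -
  note simps = F4_V_eq F4_E_eq split_V_def disjnt_def doubleton_eq_iff
  consider "s (Fs 1 2)" "\<not> s (Fs 1 4)" "\<not> s (Fs 2 2)"
    | "\<not> s (Fs 1 2)" "s (Fs 1 4)" "\<not> s (Fs 2 2)"
    | "\<not> s (Fs 1 2)" "\<not> s (Fs 1 4)" "s (Fs 2 2)"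
    using assms unfolding nbrs_F4_Fs13 Collect_conj_eq Collect_mem_eq
    by (cases "s (Fs 1 2)"; cases "s (Fs 1 4)"; cases "s (Fs 2 2)") auto
  \<comment> \<open>Each branch set is listed along a path, so that \<open>connected_in_insert\<close> applies.\<close>
  then show ?thesis
  proof cases
    case 1
    show ?thesis
      by (rule has_minor_Kbip_I[where
            As = "[{Inl (Fs 1 2), Inl (Fs 2 3)}, {Inr False, Inl (Fs 1 4)},
                   {Inl (F 2), Inl (Fs 2 4), Inl (Fs 1 1)}]"
            and Bs = "[{Inl (Fs 2 1)}, {Inl (F 1)}, {Inr True}, {Inl (Fs 2 2)}]"])
         (use assms(1) 1 in \<open>simp_all add: simps\<close>)
  next
    case 2
    show ?thesis
      by (rule has_minor_Kbip_I[where
            As = "[{Inl (Fs 1 2), Inr False}, {Inl (Fs 2 1), Inl (Fs 1 4)},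
                   {Inl (Fs 1 1), Inl (Fs 2 4)}]"
            and Bs = "[{Inl (Fs 2 3)}, {Inl (F 1)}, {Inr True}, {Inl (F 2), Inl (Fs 2 2)}]"])
         (use assms(1) 2 in \<open>simp_all add: simps\<close>)
  next
    case 3
    show ?thesis
      by (rule has_minor_Kbip_I[where
            As = "[{Inl (Fs 1 1), Inr True}, {Inl (Fs 1 2), Inl (Fs 2 3)},
                   {Inl (F 2), Inl (Fs 2 1), Inl (Fs 1 4)}]"
            and Bs = "[{Inl (F 1)}, {Inr False}, {Inl (Fs 2 2)}, {Inl (Fs 2 4)}]"])
         (use assms(1) 3 in \<open>simp_all add: simps\<close>)
  qed
qed

lemma K34_minor_split_Fs13:
  assumes "card {u \<in> nbrs F4_E (Fs 1 3). s u} \<ge> 2"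
    and "card {u \<in> nbrs F4_E (Fs 1 3). \<not> s u} \<ge> 2"
  shows "has_minor (split_V F4_V (Fs 1 3)) (split_E F4_E (Fs 1 3) s) (Kbip_V 3 4) (Kbip_E 3 4)"
proof (cases "s (Fs 1 1)")
  case True
  from True assms show ?thesis by (rule K34_minor_split_Fs13_Fs11)
next
  case False
  with assms have "has_minor (split_V F4_V (Fs 1 3)) (split_E F4_E (Fs 1 3) (\<lambda>u. \<not> s u))
      (Kbip_V 3 4) (Kbip_E 3 4)"
    by (intro K34_minor_split_Fs13_Fs11) simp_all
  moreover have "inj Not" by (rule injI) simp
  ultimately show ?thesis
    using has_minor_split_relabel[of id Not s "\<lambda>u. \<not> s u"] by simp
qed

lemma K34_minor_split_Fs23:
  assumes "card {u \<in> nbrs F4_E (Fs 2 3). s u} \<ge> 2"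
    and "card {u \<in> nbrs F4_E (Fs 2 3). \<not> s u} \<ge> 2"
  shows "has_minor (split_V F4_V (Fs 2 3)) (split_E F4_E (Fs 2 3) s) (Kbip_V 3 4) (Kbip_E 3 4)"
proof -
  have card_flip: "card {u \<in> nbrs F4_E (Fs 1 3). P (F4_flip u)} = card {u \<in> nbrs F4_E (Fs 2 3). P u}"
    for P
    using card_nbrs_image_filter[OF inj_F4_flip, of F4_E "Fs 1 3" P]
    by (simp add: F4_flip_image_E)
  have "has_minor (split_V F4_V (Fs 1 3)) (split_E F4_E (Fs 1 3) (s \<circ> F4_flip))
      (Kbip_V 3 4) (Kbip_E 3 4)"
    using assms card_flip[of s] card_flip[of "\<lambda>u. \<not> s u"]
    by (intro K34_minor_split_Fs13) simp_all
  from has_minor_split_relabel[OF inj_F4_flip inj_on_id _ this, of s] show ?thesis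
    by (simp add: F4_flip_image_V F4_flip_image_E)
qed

theorem lemma4p10:
  fixes v :: f4v and s :: "f4v \<Rightarrow> bool"
  assumes "v \<in> F4_V"
    and "card {u \<in> nbrs F4_E v. s u} \<ge> 2"
    and "card {u \<in> nbrs F4_E v. \<not> s u} \<ge> 2"
  shows "has_minor (split_V F4_V v) (split_E F4_E v s) (Kbip_V 3 4) (Kbip_E 3 4)"
proof -
  have "4 \<le> card (nbrs F4_E v)"
    using card_ge_sum_if_split[of 2 2, OF _ _ assms(2,3)] by simp
  then consider "v = Fs 1 3" | "v = Fs 2 3"
    using card_nbrs_F4_le_3[OF assms(1)] by fastforce
  then show ?thesis
    by cases (use assms(2,3) K34_minor_split_Fs13 K34_minor_split_Fs23 in auto)
qed

end
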